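(* Let $G$ be a connected weighted multigraph on the vertex set $V$, $|V|\ge2$, with positive edge weights, weighted adjacency matrix $A$, spectral radius $\rho$ and Perron vector $p=(p_1,\dots,p_n)^{\mathsf T}$, and let $\Lambda=\rho I-A$. Then for all distinct $i,j\in V$, $$(\Lambda_{jj})^{-1}_i\,a_{\setminus j\,j}=\frac{p_i}{p_j}.$$
   Context: $A=(a_{ij})$ has $a_{ij}$ equal to the sum of weights of the edges joining $i$ and $j$ (loops, multiple edges allowed). The Perron vector $p$ is the positive eigenvector of $A$ for $\rho$ with entries summing to 1. Matrices are indexed by vertices; $\Lambda_{jj}$ is $\Lambda$ with row and column $j$ deleted (indexed by $V\setminus\{j\}$); $N^{-1}_i$ is the row of $N^{-1}$ indexed by $i$; $a_{\setminus j\,j}$ is column $j$ of $A$ with $a_{jj}$ removed. *)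

theory Defs
  imports "HOL-Analysis.Analysis"
begin

text \<open>A weighted multigraph: vertex set V, edge set E, each edge has a set of
  one (loop) or two endpoints in V, and a weight.\<close>
definition weighted_multigraph ::
  "'v set \<Rightarrow> 'e set \<Rightarrow> ('e \<Rightarrow> 'v set) \<Rightarrow> ('e \<Rightarrow> real) \<Rightarrow> bool" where
  "weighted_multigraph V E ends w \<longleftrightarrow> finite V \<and> finite E \<and>
     (\<forall>e\<in>E. ends e \<subseteq> V \<and> 1 \<le> card (ends e) \<and> card (ends e) \<le> 2)"

definition positive_weights :: "'e set \<Rightarrow> ('e \<Rightarrow> real) \<Rightarrow> bool" where
  "positive_weights E w \<longleftrightarrow> (\<forall>e\<in>E. w e > 0)"

definition mg_connected :: "'v set \<Rightarrow> 'e set \<Rightarrow> ('e \<Rightarrow> 'v set) \<Rightarrow> bool" where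
  "mg_connected V E ends \<longleftrightarrow>
     (\<forall>u\<in>V. \<forall>v\<in>V. (u, v) \<in> {(x, y). \<exists>e\<in>E. ends e = {x, y}}\<^sup>*)"

definition adj_mat :: "'e set \<Rightarrow> ('e \<Rightarrow> 'v set) \<Rightarrow> ('e \<Rightarrow> real) \<Rightarrow> 'v \<Rightarrow> 'v \<Rightarrow> real" where
  "adj_mat E ends w i j = (\<Sum>e\<in>{e\<in>E. ends e = {i, j}}. w e)"

definition eigenvalue_on :: "'v set \<Rightarrow> ('v \<Rightarrow> 'v \<Rightarrow> real) \<Rightarrow> complex \<Rightarrow> bool" where
  "eigenvalue_on V M c \<longleftrightarrow> (\<exists>x :: 'v \<Rightarrow> complex. (\<exists>u\<in>V. x u \<noteq> 0) \<and>
     (\<forall>u\<in>V. (\<Sum>v\<in>V. complex_of_real (M u v) * x v) = c * x u))"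

definition spectral_radius_on :: "'v set \<Rightarrow> ('v \<Rightarrow> 'v \<Rightarrow> real) \<Rightarrow> real" where
  "spectral_radius_on V M = Max {cmod c | c. eigenvalue_on V M c}"

definition perron_vector :: "'v set \<Rightarrow> ('v \<Rightarrow> 'v \<Rightarrow> real) \<Rightarrow> real \<Rightarrow> ('v \<Rightarrow> real) \<Rightarrow> bool" where
  "perron_vector V M \<rho> p \<longleftrightarrow> (\<forall>u\<in>V. p u > 0) \<and> (\<Sum>u\<in>V. p u) = 1 \<and>
     (\<forall>u\<in>V. (\<Sum>v\<in>V. M u v * p v) = \<rho> * p u)"

definition inverse_on :: "'v set \<Rightarrow> ('v \<Rightarrow> 'v \<Rightarrow> real) \<Rightarrow> ('v \<Rightarrow> 'v \<Rightarrow> real) \<Rightarrow> bool" where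
  "inverse_on S M N \<longleftrightarrow> (\<forall>u\<in>S. \<forall>v\<in>S.
     (\<Sum>k\<in>S. M u k * N k v) = (if u = v then 1 else 0) \<and>
     (\<Sum>k\<in>S. N u k * M k v) = (if u = v then 1 else 0))"

end

theory Submission
  imports Defs "Jordan_Normal_Form.Determinant"
begin

hide_const (open) Determinant.adj_mat

text \<open>Of the graph only two facts matter: \<open>A\<close> is nonnegative, and \<open>j\<close> is reachable from
  every vertex along positive entries of \<open>A\<close>; of \<open>\<rho>\<close> and \<open>p\<close> only that \<open>p\<close> is a positive
  eigenvector for \<open>\<rho>\<close>. Deleting row and column \<open>j\<close> from \<open>A p = \<rho> p\<close> gives
  \<open>\<Lambda>_jj p = p_j a_\<setminus>jj\<close> on \<open>V - {j}\<close>, so the claim follows by applying the inverse of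
  \<open>\<Lambda>_jj\<close>. Invertibility is a maximum principle: for a kernel vector \<open>x\<close> of \<open>\<Lambda>_jj\<close>, the
  vertices maximising \<open>\<bar>x u\<bar> / p u\<close> form a set that is closed under edges and has no edge
  to \<open>j\<close>, contradicting the reachability of \<open>j\<close>.\<close>

lemma sum_shifted_mat:
  fixes A :: "'v \<Rightarrow> 'v \<Rightarrow> 'a::comm_ring_1"
  assumes "finite S" and "u \<in> S"
  shows "(\<Sum>v\<in>S. ((if u = v then \<rho> else 0) - A u v) * x v) = \<rho> * x u - (\<Sum>v\<in>S. A u v * x v)"
proof -
  have "(\<Sum>v\<in>S. (if u = v then \<rho> else 0) * x v) = (\<Sum>v\<in>S. if u = v then \<rho> * x v else 0)"
    by (rule sum.cong) auto
  also have "\<dots> = \<rho> * x u" using assms by (simp add: sum.delta)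
  finally show ?thesis by (simp add: left_diff_distrib sum_subtractf)
qed

lemma inverse_on_left_cancel:
  assumes "finite S" and "inverse_on S M N" and "i \<in> S"
  shows "(\<Sum>k\<in>S. N i k * (\<Sum>v\<in>S. M k v * x v)) = x i"
proof -
  have "(\<Sum>k\<in>S. N i k * (\<Sum>v\<in>S. M k v * x v)) = (\<Sum>v\<in>S. (\<Sum>k\<in>S. N i k * M k v) * x v)"
    unfolding sum_distrib_left sum_distrib_right by (subst sum.swap) (simp add: mult.assoc)
  also have "\<dots> = (\<Sum>v\<in>S. if i = v then x v else 0)"
    using assms(2,3) unfolding inverse_on_def by (intro sum.cong refl) auto
  also have "\<dots> = x i" using assms(1,3) by (simp add: sum.delta)
  finally show ?thesis .
qed

lemma inverse_on_of_mat_inverse: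
  assumes f: "bij_betw f {0..<n} S"
    and C: "C \<in> carrier_mat n n" "C * B = 1\<^sub>m n" "B * C = 1\<^sub>m n"
    and B: "B = mat n n (\<lambda>(a, b). M (f a) (f b))"
  shows "inverse_on S M (\<lambda>u v. C $$ (the_inv_into {0..<n} f u, the_inv_into {0..<n} f v))"
proof -
  let ?g = "the_inv_into {0..<n} f"
  have g: "?g u < n" "f (?g u) = u" if "u \<in> S" for u
    using bij_betw_apply[OF bij_betw_the_inv_into[OF f] that] f_the_inv_into_f_bij_betw[OF f that] by auto
  have reindex: "(\<Sum>k\<in>S. h k) = (\<Sum>c = 0..<n. h (f c))" for h :: "_ \<Rightarrow> real"
    using sum.reindex_bij_betw[OF f] by metis
  have gf: "?g (f a) = a" if "a < n" for a
    using f that by (simp add: bij_betw_def the_inv_into_f_f)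
  show ?thesis unfolding inverse_on_def
  proof (intro ballI conjI)
    fix u v assume u: "u \<in> S" and v: "v \<in> S"
    have "(\<Sum>k\<in>S. M u k * C $$ (?g k, ?g v)) = (B * C) $$ (?g u, ?g v)"
      unfolding reindex using C(1) g u v unfolding B
      by (simp add: scalar_prod_def Matrix.row_def col_def gf)
    then show "(\<Sum>k\<in>S. M u k * C $$ (?g k, ?g v)) = (if u = v then 1 else 0)"
      using C(3) g u v by (auto, metis)
    have "(\<Sum>k\<in>S. C $$ (?g u, ?g k) * M k v) = (C * B) $$ (?g u, ?g v)"
      unfolding reindex using C(1) g u v unfolding B
      by (simp add: scalar_prod_def Matrix.row_def col_def gf)
    then show "(\<Sum>k\<in>S. C $$ (?g u, ?g k) * M k v) = (if u = v then 1 else 0)"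
      using C(2) g u v by (auto, metis)
  qed
qed

lemma inverse_on_exists:
  fixes M :: "'v \<Rightarrow> 'v \<Rightarrow> real"
  assumes "finite S"
    and kernel: "\<And>x. \<forall>u\<in>S. (\<Sum>v\<in>S. M u v * x v) = 0 \<Longrightarrow> \<forall>u\<in>S. x u = 0"
  shows "\<exists>N. inverse_on S M N"
proof -
  obtain f where f: "bij_betw f {0..<card S} S"
    using ex_bij_betw_nat_finite[OF assms(1)] by blast
  define n where "n = card S"
  define B where "B = mat n n (\<lambda>(a, b). M (f a) (f b))"
  have Bc: "B \<in> carrier_mat n n" unfolding B_def by simp
  have "Determinant.det B \<noteq> 0"
  proof
    assume "Determinant.det B = 0"
    then obtain y where y: "y \<in> carrier_vec n" "y \<noteq> 0\<^sub>v n" "B *\<^sub>v y = 0\<^sub>v n"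
      using det_0_iff_vec_prod_zero_field[OF Bc] by blast
    let ?g = "the_inv_into {0..<n} f"
    have fn: "bij_betw f {0..<n} S" using f n_def by simp
    have g: "?g u < n" "f (?g u) = u" if "u \<in> S" for u
      using bij_betw_apply[OF bij_betw_the_inv_into[OF fn] that] f_the_inv_into_f_bij_betw[OF fn that] by auto
    have gf: "?g (f a) = a" if "a < n" for a
      using fn that by (simp add: bij_betw_def the_inv_into_f_f)
    have "\<forall>u\<in>S. (\<Sum>v\<in>S. M u v * y $ ?g v) = 0"
    proof
      fix u assume u: "u \<in> S"
      have "(\<Sum>v\<in>S. M u v * y $ ?g v) = (\<Sum>c = 0..<n. M u (f c) * y $ c)"
        using sum.reindex_bij_betw[OF fn, of "\<lambda>v. M u v * y $ ?g v"] by (simp add: gf)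
      also have "\<dots> = (B *\<^sub>v y) $ ?g u"
        using y(1) g[OF u] unfolding B_def by (simp add: scalar_prod_def Matrix.row_def)
      finally show "(\<Sum>v\<in>S. M u v * y $ ?g v) = 0" using y(3) g[OF u] by simp
    qed
    then have "\<forall>u\<in>S. y $ ?g u = 0" by (rule kernel)
    then have "y $ a = 0" if "a < n" for a
      using that gf bij_betwE[OF fn] by (metis atLeastLessThan_iff zero_le)
    then have "y = 0\<^sub>v n" using y(1) by (intro eq_vecI) auto
    with y(2) show False by simp
  qed
  then obtain C where "C \<in> carrier_mat n n" "C * B = 1\<^sub>m n" "B * C = 1\<^sub>m n"
    using det_non_zero_imp_unit[OF Bc, of "()"] unfolding Units_def ring_mat_def by auto
  with f show ?thesis
    unfolding n_def B_def by (blast intro: inverse_on_of_mat_inverse)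
qed

lemma shifted_submatrix_mult_eigenvector:
  fixes A :: "'v \<Rightarrow> 'v \<Rightarrow> real"
  assumes "finite V" and "j \<in> V" and "k \<in> V - {j}"
    and "(\<Sum>v\<in>V. A k v * p v) = \<rho> * p k"
  shows "(\<Sum>v\<in>V - {j}. ((if k = v then \<rho> else 0) - A k v) * p v) = A k j * p j"
  using assms sum_shifted_mat[of "V - {j}" k \<rho> A p] sum.remove[OF assms(1,2), of "\<lambda>v. A k v * p v"]
  by simp

lemma max_ratio_propagates:
  fixes A :: "'v \<Rightarrow> 'v \<Rightarrow> real"
  assumes "finite V" and "j \<in> V" and u: "u \<in> V - {j}"
    and nonneg: "\<And>v. v \<in> V \<Longrightarrow> 0 \<le> A u v"
    and p: "\<And>v. v \<in> V \<Longrightarrow> 0 < p v"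
    and eigen: "(\<Sum>v\<in>V. A u v * p v) = \<rho> * p u"
    and x: "\<rho> * x u = (\<Sum>v\<in>V - {j}. A u v * x v)"
    and bound: "\<And>v. v \<in> V - {j} \<Longrightarrow> \<bar>x v\<bar> \<le> M * p v"
    and max: "\<bar>x u\<bar> = M * p u" and "M > 0"
  shows "A u j = 0 \<and> (\<forall>v\<in>V - {j}. A u v \<noteq> 0 \<longrightarrow> \<bar>x v\<bar> = M * p v)"
proof -
  let ?S = "V - {j}"
  have "M * (\<rho> * p u) \<le> \<bar>\<rho> * x u\<bar>"
    using max p[of u] u \<open>M > 0\<close> by (simp add: abs_mult mult_right_mono)
  also have "\<dots> \<le> (\<Sum>v\<in>?S. A u v * \<bar>x v\<bar>)"
    unfolding x using sum_abs[of "\<lambda>v. A u v * x v" ?S] nonneg by (simp add: abs_mult)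
  finally have "M * (\<Sum>v\<in>V. A u v * p v) \<le> (\<Sum>v\<in>?S. A u v * \<bar>x v\<bar>)"
    unfolding eigen .
  moreover have "M * (\<Sum>v\<in>V. A u v * p v) - (\<Sum>v\<in>?S. A u v * \<bar>x v\<bar>)
      = (\<Sum>v\<in>?S. A u v * (M * p v - \<bar>x v\<bar>)) + M * (A u j * p j)"
    unfolding sum.remove[OF assms(1,2), of "\<lambda>v. A u v * p v"]
    by (simp add: algebra_simps sum_subtractf sum_distrib_left)
  ultimately have slack: "(\<Sum>v\<in>?S. A u v * (M * p v - \<bar>x v\<bar>)) + M * (A u j * p j) \<le> 0"
    by linarith
  have terms_nonneg: "\<forall>v\<in>?S. 0 \<le> A u v * (M * p v - \<bar>x v\<bar>)"
    using nonneg bound by simp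
  have "0 \<le> M * (A u j * p j)"
    using nonneg[OF \<open>j \<in> V\<close>] p[OF \<open>j \<in> V\<close>] \<open>M > 0\<close> by simp
  moreover have "0 \<le> (\<Sum>v\<in>?S. A u v * (M * p v - \<bar>x v\<bar>))"
    using terms_nonneg by (intro sum_nonneg) blast
  ultimately have edge_to_j: "M * (A u j * p j) = 0"
    and no_slack: "(\<Sum>v\<in>?S. A u v * (M * p v - \<bar>x v\<bar>)) = 0"
    using slack by linarith+
  have "\<forall>v\<in>?S. A u v * (M * p v - \<bar>x v\<bar>) = 0"
    using sum_nonneg_eq_0_iff[of ?S "\<lambda>v. A u v * (M * p v - \<bar>x v\<bar>)"] no_slack terms_nonneg
      \<open>finite V\<close> by simp
  then show ?thesis using edge_to_j \<open>M > 0\<close> p[OF \<open>j \<in> V\<close>] by auto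
qed

lemma shifted_submatrix_kernel_trivial:
  fixes A :: "'v \<Rightarrow> 'v \<Rightarrow> real"
  assumes "finite V" and "j \<in> V"
    and nonneg: "\<And>u v. u \<in> V \<Longrightarrow> v \<in> V \<Longrightarrow> 0 \<le> A u v"
    and p: "\<And>v. v \<in> V \<Longrightarrow> 0 < p v"
    and eigen: "\<And>u. u \<in> V \<Longrightarrow> (\<Sum>v\<in>V. A u v * p v) = \<rho> * p u"
    and reach: "\<And>u. u \<in> V \<Longrightarrow> (u, j) \<in> {(u, v). v \<in> V \<and> A u v \<noteq> 0}\<^sup>*"
    and kernel: "\<forall>u\<in>V - {j}. (\<Sum>v\<in>V - {j}. ((if u = v then \<rho> else 0) - A u v) * x v) = 0"
  shows "\<forall>u\<in>V - {j}. x u = 0"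
proof (rule ccontr)
  let ?S = "V - {j}"
  assume "\<not> (\<forall>u\<in>?S. x u = 0)"
  then obtain u0 where u0: "u0 \<in> ?S" "x u0 \<noteq> 0" by blast
  define M where "M = Max ((\<lambda>u. \<bar>x u\<bar> / p u) ` ?S)"
  have bound: "\<bar>x v\<bar> \<le> M * p v" if "v \<in> ?S" for v
  proof -
    have "\<bar>x v\<bar> / p v \<le> M" unfolding M_def using that \<open>finite V\<close> by (intro Max_ge) auto
    then show ?thesis using that p[of v] by (simp add: pos_divide_le_eq)
  qed
  have "0 < \<bar>x u0\<bar> / p u0" using u0 p by simp
  also have "\<dots> \<le> M" unfolding M_def using \<open>finite V\<close> u0 by simp
  finally have "M > 0" .
  define T where "T = {u\<in>?S. \<bar>x u\<bar> = M * p u}"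
  have "M \<in> (\<lambda>u. \<bar>x u\<bar> / p u) ` ?S" unfolding M_def using \<open>finite V\<close> u0 by (intro Max_in) auto
  then obtain u1 where "u1 \<in> ?S" "M = \<bar>x u1\<bar> / p u1" by blast
  then have u1: "u1 \<in> T" unfolding T_def using p[of u1] by simp
  have propagate: "A u j = 0 \<and> (\<forall>v\<in>?S. A u v \<noteq> 0 \<longrightarrow> v \<in> T)" if "u \<in> T" for u
  proof -
    have u: "u \<in> ?S" "\<bar>x u\<bar> = M * p u" using that unfolding T_def by auto
    have "\<rho> * x u = (\<Sum>v\<in>?S. A u v * x v)"
      using kernel u(1) sum_shifted_mat[of ?S u \<rho> A x] \<open>finite V\<close> by simp
    from max_ratio_propagates[where A = A and p = p and x = x,
        OF \<open>finite V\<close> \<open>j \<in> V\<close> u(1) _ p eigen[OF DiffD1[OF u(1)]] this bound u(2) \<open>M > 0\<close>]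
    show ?thesis using nonneg u(1) unfolding T_def by auto
  qed
  have "z \<in> T" if "(u1, z) \<in> {(u, v). v \<in> V \<and> A u v \<noteq> 0}\<^sup>*" for z
    using that
  proof (induction rule: rtrancl_induct)
    case base
    show ?case using u1 .
  next
    case (step y z)
    then show ?case using propagate[OF step.IH] by (cases "z = j") auto
  qed
  then have "j \<in> T" using reach u1 unfolding T_def by blast
  then show False unfolding T_def by simp
qed

lemma adj_mat_nonneg:
  assumes "positive_weights E w"
  shows "0 \<le> adj_mat E ends w u v"
  using assms unfolding positive_weights_def Defs.adj_mat_def
  by (intro sum_nonneg) (auto intro: less_imp_le)

lemma adj_mat_pos_of_edge:
  assumes "finite E" and "positive_weights E w" and "e \<in> E" and "ends e = {u, v}"
  shows "0 < adj_mat E ends w u v"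
proof -
  have "w e \<le> adj_mat E ends w u v"
    using assms unfolding positive_weights_def Defs.adj_mat_def
    by (intro member_le_sum) (auto intro: less_imp_le)
  with assms(2,3) show ?thesis unfolding positive_weights_def by fastforce
qed

lemma mg_connected_adj_mat_reach:
  assumes "weighted_multigraph V E ends w" and "positive_weights E w"
    and "mg_connected V E ends" and "u \<in> V" and "v \<in> V"
  shows "(u, v) \<in> {(x, y). y \<in> V \<and> adj_mat E ends w x y \<noteq> 0}\<^sup>*"
proof -
  have "{(x, y). \<exists>e\<in>E. ends e = {x, y}} \<subseteq> {(x, y). y \<in> V \<and> adj_mat E ends w x y \<noteq> 0}"
    using assms(1,2) adj_mat_pos_of_edge[of E w]
    unfolding weighted_multigraph_def by fastforce
  with assms(3-5) show ?thesis unfolding mg_connected_def by (blast dest: rtrancl_mono)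
qed

theorem lemma8:
  fixes V :: "'v set" and E :: "'e set" and ends :: "'e \<Rightarrow> 'v set" and w :: "'e \<Rightarrow> real"
    and p :: "'v \<Rightarrow> real" and i j :: 'v
  assumes "weighted_multigraph V E ends w"
    and "positive_weights E w"
    and "mg_connected V E ends"
    and "card V \<ge> 2"
    and "perron_vector V (adj_mat E ends w) (spectral_radius_on V (adj_mat E ends w)) p"
    and "i \<in> V" and "j \<in> V" and "i \<noteq> j"
  shows "let A = adj_mat E ends w; \<rho> = spectral_radius_on V A;
             \<Lambda> = (\<lambda>u v. (if u = v then \<rho> else 0) - A u v)
         in (\<exists>N. inverse_on (V - {j}) \<Lambda> N) \<and>
            (\<forall>N. inverse_on (V - {j}) \<Lambda> N \<longrightarrow>
                 (\<Sum>k\<in>V - {j}. N i k * A k j) = p i / p j)"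
proof -
  define A where "A = adj_mat E ends w"
  define \<rho> where "\<rho> = spectral_radius_on V A"
  have "finite V" using assms(1) unfolding weighted_multigraph_def by simp
  have p: "\<And>u. u \<in> V \<Longrightarrow> 0 < p u"
    and eigen: "\<And>u. u \<in> V \<Longrightarrow> (\<Sum>v\<in>V. A u v * p v) = \<rho> * p u"
    using assms(5) unfolding perron_vector_def A_def \<rho>_def by auto
  have nonneg: "\<And>u v. 0 \<le> A u v"
    unfolding A_def by (rule adj_mat_nonneg[OF assms(2)])
  have reach: "\<And>u. u \<in> V \<Longrightarrow> (u, j) \<in> {(u, v). v \<in> V \<and> A u v \<noteq> 0}\<^sup>*"
    unfolding A_def by (rule mg_connected_adj_mat_reach[OF assms(1-3) _ \<open>j \<in> V\<close>])
  have "\<forall>u\<in>V - {j}. x u = 0"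
    if "\<forall>u\<in>V - {j}. (\<Sum>v\<in>V - {j}. ((if u = v then \<rho> else 0) - A u v) * x v) = 0" for x
    by (rule shifted_submatrix_kernel_trivial[OF \<open>finite V\<close> \<open>j \<in> V\<close> nonneg p eigen reach that])
  then have invertible: "\<exists>N. inverse_on (V - {j}) (\<lambda>u v. (if u = v then \<rho> else 0) - A u v) N"
    using \<open>finite V\<close> by (intro inverse_on_exists) auto
  have "(\<Sum>k\<in>V - {j}. N i k * A k j) = p i / p j"
    if "inverse_on (V - {j}) (\<lambda>u v. (if u = v then \<rho> else 0) - A u v) N" for N
  proof -
    have "(\<Sum>v\<in>V - {j}. ((if k = v then \<rho> else 0) - A k v) * p v) = A k j * p j"
      if "k \<in> V - {j}" for k
      using shifted_submatrix_mult_eigenvector[where A = A and p = p,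
          OF \<open>finite V\<close> \<open>j \<in> V\<close> that] eigen[OF DiffD1[OF that]]
      by simp
    then have "p i = (\<Sum>k\<in>V - {j}. N i k * (A k j * p j))"
      using inverse_on_left_cancel[OF _ that, of i p] \<open>finite V\<close> assms(6,8) by simp
    also have "\<dots> = (\<Sum>k\<in>V - {j}. N i k * A k j) * p j"
      by (simp add: sum_distrib_right mult.assoc)
    finally show ?thesis using p[OF \<open>j \<in> V\<close>] by (simp add: field_simps)
  qed
  with invertible show ?thesis unfolding Let_def A_def \<rho>_def by blast
qed

end
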